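(* Let $n,r\ge 1$, $V=\mathbb F_2^n$, and for each $1\le i\le r$ let $\rho_i\in\mathrm{Sym}(V)\setminus\mathrm{AGL}(V)$ and $\theta_i\in\mathrm{GL}(V)$. Define $\overline{\rho}_i,\overline\theta_i\in\mathrm{Sym}(V\times V)$ by $(x,y)\overline\rho_i=(x+y,\ y+(x+y)\rho_i)$ and $(x,y)\overline\theta_i=((x+y)\theta_i,\ y)$. If for some index $i\in\{1,\dots,r\}$ the group $\langle\rho_i,T_n\rangle$ (the group generated by the $i$-th round functions $\rho_i\sigma_k$, $k\in V$, of the corresponding substitution permutation network) is primitive on $V$, then the group $$\big\langle \langle\overline\rho_i,\overline\theta_i,T_{2n}\rangle \;\big|\; 1\le i\le r\big\rangle\le\mathrm{Sym}(V\times V)$$ is primitive on $V\times V$.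
   Context: Maps act on the right: $x\rho$ is the image of $x$ under $\rho$. $T_n$ is the group of translations $\sigma_v:x\mapsto x+v$ of $V$, and $T_{2n}$ is the group of translations $(x,y)\mapsto(x+v,y+w)$ of $V\times V$. $\mathrm{AGL}(V)$ is the group of affine permutations of $V$, $\mathrm{GL}(V)$ the group of linear ones. A group $G$ acting on a set $M$ is primitive if it is transitive and there is no $G$-invariant partition of $M$ other than $\{M\}$ and the partition into singletons. *)

theory Defs
  imports Main "HOL-Library.Disjoint_Sets"
begin

text \<open>V = F_2^n is modelled as the type 'n \<Rightarrow> bool for a finite nonempty type 'n
  with n = CARD('n); vector addition over F_2 is pointwise exclusive or.\<close>

type_synonym 'n vec2 = "'n \<Rightarrow> bool"

definition vadd :: "'n vec2 \<Rightarrow> 'n vec2 \<Rightarrow> 'n vec2" where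
  "vadd x y = (\<lambda>i. x i \<noteq> y i)"

definition transl :: "'n vec2 \<Rightarrow> ('n vec2 \<Rightarrow> 'n vec2)" where
  "transl v = (\<lambda>x. vadd x v)"

definition Tn :: "('n vec2 \<Rightarrow> 'n vec2) set" where
  "Tn = range transl"

definition T2n :: "('n vec2 \<times> 'n vec2 \<Rightarrow> 'n vec2 \<times> 'n vec2) set" where
  "T2n = {(\<lambda>(x, y). (vadd x v, vadd y w)) | v w. True}"

definition lin2 :: "('n vec2 \<Rightarrow> 'n vec2) \<Rightarrow> bool" where
  "lin2 f \<longleftrightarrow> (\<forall>x y. f (vadd x y) = vadd (f x) (f y))"

definition GL2 :: "('n vec2 \<Rightarrow> 'n vec2) set" where
  "GL2 = {f. bij f \<and> lin2 f}"

definition AGL2 :: "('n vec2 \<Rightarrow> 'n vec2) set" where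
  "AGL2 = {f. \<exists>L c. L \<in> GL2 \<and> f = (\<lambda>x. vadd (L x) c)}"

inductive_set gen_group :: "('a \<Rightarrow> 'a) set \<Rightarrow> ('a \<Rightarrow> 'a) set" for S where
  gen_id: "id \<in> gen_group S"
| gen_base: "s \<in> S \<Longrightarrow> s \<in> gen_group S"
| gen_comp: "f \<in> gen_group S \<Longrightarrow> g \<in> gen_group S \<Longrightarrow> f \<circ> g \<in> gen_group S"
| gen_inv: "f \<in> gen_group S \<Longrightarrow> inv f \<in> gen_group S"

definition transitive_on_univ :: "('a \<Rightarrow> 'a) set \<Rightarrow> bool" where
  "transitive_on_univ G \<longleftrightarrow> (\<forall>x y. \<exists>g\<in>G. g x = y)"

definition invariant_partition :: "('a \<Rightarrow> 'a) set \<Rightarrow> 'a set set \<Rightarrow> bool" where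
  "invariant_partition G P \<longleftrightarrow> partition_on UNIV P \<and> (\<forall>g\<in>G. \<forall>B\<in>P. g ` B \<in> P)"

definition primitive :: "('a \<Rightarrow> 'a) set \<Rightarrow> bool" where
  "primitive G \<longleftrightarrow> transitive_on_univ G \<and>
     (\<forall>P. invariant_partition G P \<longrightarrow> P = {UNIV} \<or> P = {{x} | x. True})"

definition rhobar :: "('n vec2 \<Rightarrow> 'n vec2) \<Rightarrow> ('n vec2 \<times> 'n vec2 \<Rightarrow> 'n vec2 \<times> 'n vec2)" where
  "rhobar \<rho> = (\<lambda>(x, y). (vadd x y, vadd y (\<rho> (vadd x y))))"

definition thetabar :: "('n vec2 \<Rightarrow> 'n vec2) \<Rightarrow> ('n vec2 \<times> 'n vec2 \<Rightarrow> 'n vec2 \<times> 'n vec2)" where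
  "thetabar \<theta> = (\<lambda>(x, y). (\<theta> (vadd x y), y))"

end

theory Submission
  imports Defs
begin

text \<open>Let \<open>P\<close> be a block system of the group \<open>G\<close> on \<open>V \<times> V\<close>. Since \<open>G\<close> contains \<open>T\<^sub>2\<^sub>n\<close>, the
  blocks are the cosets of the subgroup \<open>U\<close> forming the block of \<open>0\<close>, and every \<open>g \<in> G\<close>
  permutes these cosets. Applying this to \<open>\<rho>\<^sub>i\<close>-bar, its inverse and \<open>\<theta>\<^sub>i\<close>-bar shows that both
  the projection of \<open>U\<close> to the first coordinate and the kernel \<open>{x. (x, 0) \<in> U}\<close> are
  subgroups of \<open>V\<close> whose cosets are permuted by \<open>\<rho>\<^sub>i\<close>; by primitivity of \<open>\<langle>\<rho>\<^sub>i, T\<^sub>n\<rangle>\<close> each is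
  \<open>0\<close> or \<open>V\<close>. In the only case not giving \<open>U = 0\<close> or \<open>U = V \<times> V\<close>, the derivatives
  \<open>\<rho>\<^sub>i(u + a) + \<rho>\<^sub>i(a)\<close> do not depend on \<open>a\<close>, i.e. \<open>\<rho>\<^sub>i\<close> is affine, which is excluded.\<close>

abbreviation vzero :: "'n vec2" where
  "vzero \<equiv> \<lambda>_. False"

lemma vadd_comm: "vadd x y = vadd y x"
  by (auto simp: vadd_def fun_eq_iff)

lemma vadd_assoc: "vadd (vadd x y) w = vadd x (vadd y w)"
  by (auto simp: vadd_def fun_eq_iff)

lemma vadd_left_commute: "vadd x (vadd y w) = vadd y (vadd x w)"
  by (auto simp: vadd_def fun_eq_iff)

lemmas vadd_ac = vadd_assoc vadd_comm vadd_left_commute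

lemma vadd_self [simp]: "vadd x x = vzero"
  by (auto simp: vadd_def fun_eq_iff)

lemma vadd_self_left [simp]: "vadd x (vadd x y) = y"
  by (auto simp: vadd_def fun_eq_iff)

lemma vadd_zero [simp]: "vadd x vzero = x" "vadd vzero x = x"
  by (auto simp: vadd_def fun_eq_iff)

lemma vadd_eq_zero_iff: "vadd x y = vzero \<longleftrightarrow> x = y"
  by (auto simp: vadd_def fun_eq_iff)

lemma bij_vadd_right: "bij (\<lambda>x. vadd x v)"
  by (rule o_bij[of "\<lambda>x. vadd x v"]) (auto simp: fun_eq_iff vadd_ac)

definition padd :: "'n vec2 \<times> 'n vec2 \<Rightarrow> 'n vec2 \<times> 'n vec2 \<Rightarrow> 'n vec2 \<times> 'n vec2" where
  "padd p q = (vadd (fst p) (fst q), vadd (snd p) (snd q))"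

lemma padd_Pair [simp]: "padd (a, b) (c, d) = (vadd a c, vadd b d)"
  by (simp add: padd_def)

lemma padd_self_left [simp]: "padd p (padd p q) = q"
  by (cases p; cases q) simp

lemma padd_self_right [simp]: "padd (padd u p) p = u"
  by (cases p; cases u) (simp add: vadd_ac)

lemma padd_zero_left [simp]: "padd (vzero, vzero) p = p"
  by (cases p) simp

lemma padd_translation_in_T2n: "(\<lambda>p. padd p q) \<in> T2n"
  unfolding T2n_def by (cases q) (auto simp: fun_eq_iff)

lemma transitive_on_univ_if_T2n_subset: "T2n \<subseteq> G \<Longrightarrow> transitive_on_univ G"
  unfolding transitive_on_univ_def
  by (metis padd_self_left padd_translation_in_T2n subsetD)

definition ddiff :: "('n vec2 \<Rightarrow> 'n vec2) \<Rightarrow> 'n vec2 \<Rightarrow> 'n vec2 \<Rightarrow> 'n vec2" where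
  "ddiff \<rho> u a = vadd (\<rho> (vadd u a)) (\<rho> a)"

lemma ddiff_zero_direction [simp]: "ddiff \<rho> vzero a = vzero"
  by (simp add: ddiff_def)

lemma in_AGL2_if_ddiff_independent:
  assumes "bij \<rho>" and indep: "\<And>u a. ddiff \<rho> u a = ddiff \<rho> u vzero"
  shows "\<rho> \<in> AGL2"
proof -
  define L where "L x = vadd (\<rho> x) (\<rho> vzero)" for x
  have "L = (\<lambda>x. vadd x (\<rho> vzero)) \<circ> \<rho>"
    by (simp add: L_def fun_eq_iff)
  then have "bij L"
    using bij_comp[OF \<open>bij \<rho>\<close> bij_vadd_right] by simp
  moreover have "lin2 L"
    unfolding lin2_def
  proof (intro allI)
    fix x y
    have "\<rho> (vadd x y) = vadd (\<rho> y) (vadd (\<rho> x) (\<rho> vzero))"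
      using indep[of x y] by (simp add: ddiff_def) (metis vadd_self_left vadd_comm)
    then show "L (vadd x y) = vadd (L x) (L y)"
      by (simp add: L_def vadd_ac)
  qed
  moreover have "\<rho> = (\<lambda>x. vadd (L x) (\<rho> vzero))"
    by (simp add: L_def fun_eq_iff vadd_ac)
  ultimately show ?thesis
    unfolding AGL2_def GL2_def by blast
qed

lemma gen_group_bij:
  assumes "\<forall>s\<in>S. bij s" and "g \<in> gen_group S"
  shows "bij g"
  using assms(2)
proof induction
  case (gen_comp f g)
  then show ?case using bij_comp[of g f] by blast
qed (auto simp: assms(1) bij_imp_bij_inv bij_id[unfolded id_def])

lemma gen_group_preserves_blocks:
  fixes P :: "'a::finite set set"
  assumes gens: "\<forall>s\<in>S. bij s \<and> (\<forall>B\<in>P. s ` B \<in> P)" and g: "g \<in> gen_group S"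
  shows "\<forall>B\<in>P. g ` B \<in> P"
  using g
proof induction
  case (gen_comp f g)
  then show ?case by (metis image_comp)
next
  case (gen_inv f)
  have "bij f" using gen_group_bij[OF _ gen_inv.hyps] gens by blast
  have "finite P" by (rule finite_subset[of _ "Pow UNIV"]) auto
  moreover have "inj_on (\<lambda>B. f ` B) P"
    using \<open>bij f\<close> by (auto simp: inj_on_def bij_def inj_image_eq_iff)
  ultimately have onto: "(\<lambda>B. f ` B) ` P = P"
    using endo_inj_surj gen_inv.IH by blast
  show ?case
  proof
    fix B assume "B \<in> P"
    then obtain B' where "B' \<in> P" "B = f ` B'"
      using onto by (metis imageE)
    moreover have "inv f ` f ` B' = B'"
      using \<open>bij f\<close> by (simp add: image_comp[symmetric] bij_def inv_o_cancel)
    ultimately show "inv f ` B \<in> P" by simp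
  qed
qed (use gens in auto)

definition coset :: "'n vec2 set \<Rightarrow> 'n vec2 \<Rightarrow> 'n vec2 set" where
  "coset W a = (\<lambda>w. vadd w a) ` W"

lemma mem_coset: "x \<in> coset W a \<longleftrightarrow> vadd x a \<in> W"
proof
  assume "x \<in> coset W a"
  then show "vadd x a \<in> W"
    by (auto simp: coset_def vadd_assoc)
next
  assume "vadd x a \<in> W"
  then show "x \<in> coset W a"
    unfolding coset_def by (rule rev_image_eqI) (simp add: vadd_assoc)
qed

lemma card_coset: "card (coset W a) = card W"
  unfolding coset_def
  by (rule card_image[OF inj_on_subset[OF bij_is_inj[OF bij_vadd_right] subset_UNIV]])

lemma bij_transl: "bij (transl v)"
  by (simp add: transl_def bij_vadd_right)

lemma transl_image_coset: "transl v ` coset W a = coset W (vadd a v)"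
  unfolding coset_def transl_def image_comp by (simp add: o_def vadd_assoc)

lemma coset_partition:
  assumes zero: "vzero \<in> W" and closed: "\<And>x y. x \<in> W \<Longrightarrow> y \<in> W \<Longrightarrow> vadd x y \<in> W"
  shows "partition_on UNIV (range (coset W))"
proof (rule partition_onI)
  have self: "a \<in> coset W a" for a
    using zero by (simp add: mem_coset)
  then show "\<Union> (range (coset W)) = UNIV" and "{} \<notin> range (coset W)"
    by auto
  have same: "coset W a = coset W b" if "x \<in> coset W a" "x \<in> coset W b" for a b x
  proof -
    have "vadd a b \<in> W"
      using closed[OF that[unfolded mem_coset]] by (simp add: vadd_ac)
    moreover have "vadd y b = vadd (vadd y a) (vadd a b)" "vadd y a = vadd (vadd y b) (vadd a b)"
      for y
      by (auto simp: vadd_def)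
    ultimately show ?thesis
      unfolding set_eq_iff mem_coset using closed by metis
  qed
  show "disjnt p q" if "p \<in> range (coset W)" "q \<in> range (coset W)" and "p \<noteq> q" for p q
  proof -
    obtain a b where p: "p = coset W a" and q: "q = coset W b"
      using \<open>p \<in> range (coset W)\<close> \<open>q \<in> range (coset W)\<close> by blast
    show ?thesis
      unfolding disjnt_iff p q using same \<open>p \<noteq> q\<close>[unfolded p q] by blast
  qed
qed

lemma image_coset_if_ddiff_closed:
  fixes W :: "'n::finite vec2 set"
  assumes "bij \<rho>" and "\<And>w a. w \<in> W \<Longrightarrow> ddiff \<rho> w a \<in> W"
  shows "\<rho> ` coset W a = coset W (\<rho> a)"
proof (rule card_subset_eq)
  show "\<rho> ` coset W a \<subseteq> coset W (\<rho> a)"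
  proof (rule image_subsetI)
    fix x assume "x \<in> coset W a"
    then have "ddiff \<rho> (vadd x a) a \<in> W"
      using assms(2) by (simp add: mem_coset)
    then show "\<rho> x \<in> coset W (\<rho> a)"
      by (simp add: mem_coset ddiff_def vadd_assoc)
  qed
  show "card (\<rho> ` coset W a) = card (coset W (\<rho> a))"
    using card_image[OF inj_on_subset[OF bij_is_inj[OF \<open>bij \<rho>\<close>] subset_UNIV]]
    by (simp add: card_coset)
qed simp

lemma ddiff_closed_subgroup_trivial:
  fixes \<rho> :: "'n::finite vec2 \<Rightarrow> 'n vec2"
  assumes prim: "primitive (gen_group (insert \<rho> Tn))" and "bij \<rho>"
    and zero: "vzero \<in> W" and closed: "\<And>x y. x \<in> W \<Longrightarrow> y \<in> W \<Longrightarrow> vadd x y \<in> W"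
    and ddiff_closed: "\<And>w a. w \<in> W \<Longrightarrow> ddiff \<rho> w a \<in> W"
  shows "W = {vzero} \<or> W = UNIV"
proof -
  let ?P = "range (coset W)"
  have gens: "\<forall>s\<in>insert \<rho> Tn. bij s \<and> (\<forall>B\<in>?P. s ` B \<in> ?P)"
    using \<open>bij \<rho>\<close> image_coset_if_ddiff_closed[OF \<open>bij \<rho>\<close> ddiff_closed]
    by (auto simp: Tn_def transl_image_coset bij_transl)
  then have "invariant_partition (gen_group (insert \<rho> Tn)) ?P"
    unfolding invariant_partition_def
    using coset_partition[OF zero closed] gen_group_preserves_blocks[OF gens] by blast
  then have "?P = {UNIV} \<or> ?P = {{x} | x. True}"
    using prim by (auto simp: primitive_def)
  moreover have "W = coset W vzero"
    by (simp add: coset_def)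
  then have "W \<in> ?P"
    by (metis rangeI)
  ultimately consider "W = UNIV" | x where "W = {x}"
    by blast
  then show ?thesis
    using zero by cases auto
qed

definition maps_cosets ::
    "('n vec2 \<times> 'n vec2 \<Rightarrow> 'n vec2 \<times> 'n vec2) \<Rightarrow> ('n vec2 \<times> 'n vec2) set \<Rightarrow> bool" where
  "maps_cosets g U \<longleftrightarrow> (\<forall>u\<in>U. \<forall>p. padd (g (padd u p)) (g p) \<in> U)"

locale T2n_block_system =
  fixes G :: "('n::finite vec2 \<times> 'n vec2 \<Rightarrow> 'n vec2 \<times> 'n vec2) set"
    and P :: "('n vec2 \<times> 'n vec2) set set"
    and U :: "('n vec2 \<times> 'n vec2) set"
  assumes invariant: "invariant_partition G P"
    and T2n_subset: "T2n \<subseteq> G"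
    and block_U: "U \<in> P"
    and zero_in_U: "(vzero, vzero) \<in> U"
begin

lemma partition: "partition_on UNIV P"
  using invariant by (simp add: invariant_partition_def)

lemma image_block: "g \<in> G \<Longrightarrow> B \<in> P \<Longrightarrow> g ` B \<in> P"
  using invariant by (simp add: invariant_partition_def)

lemma block_unique: "B \<in> P \<Longrightarrow> B' \<in> P \<Longrightarrow> x \<in> B \<Longrightarrow> x \<in> B' \<Longrightarrow> B = B'"
  using disjointD[OF partition_onD2[OF partition]] by blast

lemma block_eq_translate:
  assumes "B \<in> P" and "q \<in> B"
  shows "B = (\<lambda>p. padd p q) ` U"
proof (rule block_unique[OF assms(1) image_block assms(2)])
  show "(\<lambda>p. padd p q) \<in> G"
    using T2n_subset padd_translation_in_T2n by blast
  show "q \<in> (\<lambda>p. padd p q) ` U"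
    using zero_in_U by (intro rev_image_eqI[of "(vzero, vzero)"]) (auto simp: padd_def)
qed (fact block_U)

lemma padd_closed:
  assumes "u \<in> U" and "u' \<in> U"
  shows "padd u u' \<in> U"
proof -
  have "U = (\<lambda>p. padd p u') ` U"
    using block_eq_translate[OF block_U \<open>u' \<in> U\<close>] .
  then show ?thesis
    using \<open>u \<in> U\<close> by (metis imageI)
qed

lemma maps_cosets_of_mem:
  assumes "g \<in> G"
  shows "maps_cosets g U"
  unfolding maps_cosets_def
proof (intro ballI allI)
  fix u p assume "u \<in> U"
  have "(\<lambda>x. padd x p) \<in> G"
    using T2n_subset padd_translation_in_T2n by blast
  then have "g ` (\<lambda>x. padd x p) ` U \<in> P"
    by (intro image_block[OF \<open>g \<in> G\<close>] image_block[OF _ block_U])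
  moreover have "g p \<in> g ` (\<lambda>x. padd x p) ` U"
    using zero_in_U by (intro imageI rev_image_eqI[of "(vzero, vzero)"]) auto
  ultimately have "g (padd u p) \<in> (\<lambda>x. padd x (g p)) ` U"
    using block_eq_translate \<open>u \<in> U\<close> by blast
  then show "padd (g (padd u p)) (g p) \<in> U"
    by auto
qed

lemma singleton_zero_block:
  assumes "U = {(vzero, vzero)}"
  shows "P = {{x} | x. True}"
proof -
  have singleton: "B = {q}" if "B \<in> P" "q \<in> B" for B q
    using block_eq_translate[OF that] assms by simp
  show ?thesis
  proof (intro set_eqI iffI)
    fix B assume "B \<in> P"
    then show "B \<in> {{x} | x. True}"
      using partition_onD3[OF partition] singleton by (metis (mono_tags) all_not_in_conv mem_Collect_eq)
  next
    fix B :: "('n vec2 \<times> 'n vec2) set"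
    assume "B \<in> {{x} | x. True}"
    then obtain x where "B = {x}" by blast
    moreover obtain B' where "B' \<in> P" "x \<in> B'"
      using partition_onD1[OF partition] by blast
    ultimately show "B \<in> P"
      using singleton by blast
  qed
qed

lemma universal_zero_block:
  assumes "U = UNIV"
  shows "P = {UNIV}"
proof -
  have "B = UNIV" if B: "B \<in> P" for B
  proof -
    obtain x where "x \<in> B"
      using B partition_onD3[OF partition] by (metis ex_in_conv)
    then show ?thesis
      using block_unique[OF B block_U] assms by blast
  qed
  then show ?thesis
    using block_U assms by blast
qed

end

lemma inv_rhobar: "inv (rhobar \<rho>) = (\<lambda>(u, v). (vadd u (vadd v (\<rho> u)), vadd v (\<rho> u)))"
  by (rule inv_unique_comp) (auto simp: fun_eq_iff rhobar_def vadd_ac)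

locale rhobar_coset_stable =
  fixes \<rho> :: "'n::finite vec2 \<Rightarrow> 'n vec2"
    and \<theta> :: "'n vec2 \<Rightarrow> 'n vec2"
    and U :: "('n vec2 \<times> 'n vec2) set"
  assumes bij_rho: "bij \<rho>"
    and zero_in_U: "(vzero, vzero) \<in> U"
    and padd_closed: "\<And>u u'. u \<in> U \<Longrightarrow> u' \<in> U \<Longrightarrow> padd u u' \<in> U"
    and maps_cosets_rhobar: "maps_cosets (rhobar \<rho>) U"
    and maps_cosets_inv_rhobar: "maps_cosets (inv (rhobar \<rho>)) U"
    and maps_cosets_thetabar: "maps_cosets (thetabar \<theta>) U"
begin

lemma vadd_closed: "(a, b) \<in> U \<Longrightarrow> (c, d) \<in> U \<Longrightarrow> (vadd a c, vadd b d) \<in> U"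
  using padd_closed by fastforce

lemma rhobar_step: "(x, y) \<in> U \<Longrightarrow> (y, ddiff \<rho> (vadd x y) a) \<in> U"
  using vadd_closed maps_cosets_rhobar[unfolded maps_cosets_def, rule_format, of "(x, y)" "(a, vzero)"]
  by (fastforce simp: rhobar_def ddiff_def vadd_ac)

lemma inv_rhobar_step: "(u, v) \<in> U \<Longrightarrow> (vadd v (ddiff \<rho> u a), ddiff \<rho> u a) \<in> U"
  using vadd_closed maps_cosets_inv_rhobar[unfolded maps_cosets_def inv_rhobar,
      rule_format, of "(u, v)" "(a, vzero)"]
  by (fastforce simp: ddiff_def vadd_ac)

text \<open>Only \<open>\<theta>(x + y)\<close> at \<open>x = y\<close> enters here, so nothing about \<open>\<theta>\<close> is needed.\<close>
lemma thetabar_step: "(e, e) \<in> U \<Longrightarrow> (vzero, e) \<in> U"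
  using maps_cosets_thetabar[unfolded maps_cosets_def, rule_format, of "(e, e)" "(vzero, vzero)"]
  by (simp add: thetabar_def)

lemma ddiff_mem:
  assumes "(w, v) \<in> U"
  shows "(ddiff \<rho> w a, ddiff \<rho> v a) \<in> U"
  using rhobar_step[OF inv_rhobar_step[OF assms, of a], of a] by (simp add: vadd_ac)

lemma ddiff_mem_kernel:
  assumes "(w, vzero) \<in> U"
  shows "(ddiff \<rho> w a, vzero) \<in> U"
  using ddiff_mem[OF assms] by simp

lemma Domain_trivial:
  assumes "primitive (gen_group (insert \<rho> Tn))"
  shows "Domain U = {vzero} \<or> Domain U = UNIV"
proof (rule ddiff_closed_subgroup_trivial[OF assms bij_rho])
  show "vzero \<in> Domain U"
    using zero_in_U by blast
  show "vadd x y \<in> Domain U" if x: "x \<in> Domain U" and y: "y \<in> Domain U" for x y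
  proof -
    obtain x' y' where "(x, x') \<in> U" "(y, y') \<in> U"
      using x y by blast
    then show ?thesis
      by (rule DomainI[OF vadd_closed])
  qed
  show "ddiff \<rho> w a \<in> Domain U" if w: "w \<in> Domain U" for w a
  proof -
    obtain v where "(w, v) \<in> U"
      using w by blast
    then show ?thesis
      by (rule DomainI[OF ddiff_mem])
  qed
qed

lemma kernel_trivial:
  assumes "primitive (gen_group (insert \<rho> Tn))"
  shows "{x. (x, vzero) \<in> U} = {vzero} \<or> {x. (x, vzero) \<in> U} = UNIV"
proof (rule ddiff_closed_subgroup_trivial[OF assms bij_rho])
  show "vadd x y \<in> {x. (x, vzero) \<in> U}" if "x \<in> {x. (x, vzero) \<in> U}" "y \<in> {x. (x, vzero) \<in> U}" for x y
    using that vadd_closed[of x vzero y vzero] by simp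
qed (use zero_in_U ddiff_mem_kernel in simp_all)

lemma Range_subset_Domain: "Range U \<subseteq> Domain U"
proof
  fix y assume "y \<in> Range U"
  then obtain x where "(x, y) \<in> U"
    by blast
  then show "y \<in> Domain U"
    by (rule DomainI[OF rhobar_step])
qed

text \<open>Comparing the inverse step at the base points \<open>a\<close> and \<open>0\<close> yields an element \<open>(e, e)\<close>
  of \<open>U\<close>; the \<open>\<theta>\<close>-step moves it into the kernel, so \<open>e = 0\<close>.\<close>
lemma ddiff_independent:
  assumes Domain_univ: "Domain U = UNIV" and kernel: "{x. (x, vzero) \<in> U} = {vzero}"
  shows "ddiff \<rho> u a = ddiff \<rho> u vzero"
proof -
  have "u \<in> Domain U"
    using Domain_univ by simp
  then obtain v where v: "(u, v) \<in> U"
    by blast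
  define e where "e = vadd (ddiff \<rho> u a) (ddiff \<rho> u vzero)"
  have "(e, e) \<in> U"
    using vadd_closed[OF inv_rhobar_step[OF v, of a] inv_rhobar_step[OF v, of vzero]]
    by (simp add: e_def vadd_ac)
  then have "(e, vzero) \<in> U"
    using inv_rhobar_step[OF thetabar_step, of e vzero] by simp
  then have "e = vzero"
    using kernel by (simp add: set_eq_iff)
  then show ?thesis
    by (simp add: e_def vadd_eq_zero_iff)
qed

lemma trivial_or_universal:
  assumes "primitive (gen_group (insert \<rho> Tn))" and "\<rho> \<notin> AGL2"
  shows "U = {(vzero, vzero)} \<or> U = UNIV"
  using Domain_trivial[OF assms(1)]
proof
  assume Domain_zero: "Domain U = {vzero}"
  have "p = (vzero, vzero)" if "p \<in> U" for p
  proof -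
    obtain a b where p: "p = (a, b)"
      by fastforce
    have "a \<in> Domain U" "b \<in> Domain U"
      using that Range_subset_Domain unfolding p by blast+
    then show ?thesis
      using Domain_zero p by simp
  qed
  then show ?thesis
    using zero_in_U by blast
next
  assume Domain_univ: "Domain U = UNIV"
  consider (kernel_univ) "{x. (x, vzero) \<in> U} = UNIV" | (kernel_zero) "{x. (x, vzero) \<in> U} = {vzero}"
    using kernel_trivial[OF assms(1)] by blast
  then show ?thesis
  proof cases
    case kernel_univ
    then have kernel: "(x, vzero) \<in> U" for x
      by (simp add: set_eq_iff)
    have "(x, y) \<in> U" for x y
    proof -
      obtain w where w: "\<rho> w = vadd y (\<rho> vzero)"
        using bij_rho by (metis bij_pointE)
      have "(vzero, ddiff \<rho> w vzero) \<in> U"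
        using rhobar_step[OF kernel, of w vzero] by simp
      moreover have "ddiff \<rho> w vzero = y"
        using w by (simp add: ddiff_def vadd_assoc)
      ultimately show ?thesis
        using vadd_closed[of x vzero vzero y] kernel by simp
    qed
    then show ?thesis
      by auto
  next
    case kernel_zero
    have "\<rho> \<in> AGL2"
      by (rule in_AGL2_if_ddiff_independent[OF bij_rho ddiff_independent[OF Domain_univ kernel_zero]])
    with assms(2) show ?thesis
      by blast
  qed
qed

end

theorem corollary3p4:
  fixes r :: nat
    and \<rho> :: "nat \<Rightarrow> ('n::finite vec2 \<Rightarrow> 'n vec2)"
    and \<theta> :: "nat \<Rightarrow> ('n vec2 \<Rightarrow> 'n vec2)"
  assumes "r \<ge> 1"
    and rho: "\<And>i. i \<in> {1..r} \<Longrightarrow> bij (\<rho> i) \<and> \<rho> i \<notin> AGL2"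
    and theta: "\<And>i. i \<in> {1..r} \<Longrightarrow> \<theta> i \<in> GL2"
    and prim: "\<exists>i\<in>{1..r}. primitive (gen_group (insert (\<rho> i) Tn))"
  shows "primitive (gen_group (\<Union>i\<in>{1..r}. gen_group ({rhobar (\<rho> i), thetabar (\<theta> i)} \<union> T2n)))"
proof -
  obtain i where i: "i \<in> {1..r}" and prim_i: "primitive (gen_group (insert (\<rho> i) Tn))"
    using prim by blast
  define G where "G = gen_group (\<Union>i\<in>{1..r}. gen_group ({rhobar (\<rho> i), thetabar (\<theta> i)} \<union> T2n))"
  have gens: "{rhobar (\<rho> i), thetabar (\<theta> i)} \<union> T2n \<subseteq> G"
    using i by (auto simp: G_def intro!: gen_group.gen_base)
  then have inv_rhobar_in_G: "inv (rhobar (\<rho> i)) \<in> G"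
    unfolding G_def by (simp add: gen_group.gen_inv)
  show ?thesis
    unfolding G_def[symmetric] primitive_def
  proof (intro conjI allI impI)
    show "transitive_on_univ G"
      using gens by (simp add: transitive_on_univ_if_T2n_subset)
    fix P assume "invariant_partition G P"
    then have "partition_on UNIV P"
      by (simp add: invariant_partition_def)
    then obtain U where "U \<in> P" "(vzero, vzero) \<in> U"
      using partition_onD1 by (metis UNIV_I UnionE)
    with \<open>invariant_partition G P\<close> interpret T2n_block_system G P U
      using gens by (intro T2n_block_system.intro) auto
    interpret rhobar_coset_stable "\<rho> i" "\<theta> i" U
    proof unfold_locales
      show "bij (\<rho> i)"
        using rho[OF i] by blast
      show "maps_cosets (rhobar (\<rho> i)) U" "maps_cosets (inv (rhobar (\<rho> i))) U"
        "maps_cosets (thetabar (\<theta> i)) U"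
        using gens inv_rhobar_in_G by (auto intro: maps_cosets_of_mem)
    qed (fact zero_in_U, fact padd_closed)
    show "P = {UNIV} \<or> P = {{x} | x. True}"
      using trivial_or_universal[OF prim_i] rho[OF i] singleton_zero_block universal_zero_block by blast
  qed
qed

end
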